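(* Let $X_1=\{(\alpha,\beta):\alpha\in(0,\pi/4],\ \beta\in[t(\alpha),\alpha]\}$ and $X_2=\{(\alpha,\beta):\alpha\in[\pi/4,\pi/2),\ \beta\in[0,\alpha]\}$. For all $(\alpha,\beta)\in X_1\cup X_2$, the competitive ratio of the $\beta$-Hedge algorithm with parameter $\beta$ (for half angle-of-view $\alpha$) equals $f_1(\alpha,\beta,r_0(\alpha,\beta))$.
   Context: Online drone coverage on a line. A drone has a fixed half angle-of-view $\alpha\in(0,\pi/2)$. A drone at a point $T=(t_x,t_y)$ with $t_y\ge 0$ covers the segment $[t_x-t_y\tan\alpha,\ t_x+t_y\tan\alpha]$ of the $x$-axis. For a point $X=(x,0)$ its feasibility cone is $\mathrm{FC}(X)=\{(u,v): v\ge 0,\ |u-x|\le v\tan\alpha\}$, and the feasibility cone of a finite set of points is the intersection of their cones. An input is a sequence $X_0=(0,0),X_1,\dots,X_n$ ($n\ge1$) of points $X_i=(x_i,0)$ revealed one at a time. A solution is a sequence of positions $P_0=(0,0),P_1,\dots,P_n$ with $P_i\in\mathrm{FC}(X_0,\dots,X_i)$; its cost is $\sum_i|P_iP_{i+1}|$. $\mathrm{OPT}$ is the minimum cost of a solution (input known in advance). A request $X_{i+1}$ is redundant if $x_{i+1}\in[\min_{j\le i}x_j,\max_{j\le i}x_j]$. An input is good if it has no redundant requests, $\min_j x_j=-1$ and $\max_j x_j\in[0,1]$. The competitive ratio is the supremum over good inputs of the algorithm's cost divided by $\mathrm{OPT}$. The $\beta$-Hedge algorithm with parameter $\beta\in[0,\alpha]$: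 if $P_{i-1}\in\mathrm{FC}(X_0,\dots,X_i)$ then $P_i=P_{i-1}$; otherwise the drone moves from $P_{i-1}$ along the ray with direction $(\operatorname{sgn}(x_i)\sin\beta,\cos\beta)$, and $P_i$ is the first point of this ray in $\mathrm{FC}(X_0,\dots,X_i)$. $f_1(\alpha,\beta,r)=\frac{2\sin\alpha}{\cos\beta(\tan\alpha+\tan\beta)}\cdot\frac{1+\frac{2\tan\beta}{\tan\alpha+\tan\beta}r}{\sqrt{1+r^2+2\cos(2\alpha)r}}$; with $A=\frac{2\tan\beta}{\tan\alpha+\tan\beta}$, $B=2\cos(2\alpha)$, $r_0(\alpha,\beta)=\frac{2A-B}{2-AB}$; and $t(\alpha)=\arctan\!\left(\frac{\sin(3\alpha)-\sin\alpha}{3\cos\alpha-\cos(3\alpha)}\right)$. *)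

theory Defs
  imports Complex_Main "HOL-Library.Extended_Real"
begin

type_synonym pt = "real \<times> real"

definition edist :: "pt \<Rightarrow> pt \<Rightarrow> real" where
  "edist p q = sqrt ((fst p - fst q)^2 + (snd p - snd q)^2)"

definition FC :: "real \<Rightarrow> real \<Rightarrow> pt set" where
  "FC \<alpha> x = {(u,v). v \<ge> 0 \<and> \<bar>u - x\<bar> \<le> v * tan \<alpha>}"

definition FCs :: "real \<Rightarrow> (nat \<Rightarrow> real) \<Rightarrow> nat \<Rightarrow> pt set" where
  "FCs \<alpha> x i = (\<Inter>j\<in>{..i}. FC \<alpha> (x j))"

definition cost :: "(nat \<Rightarrow> pt) \<Rightarrow> nat \<Rightarrow> real" where
  "cost P n = (\<Sum>i<n. edist (P i) (P (Suc i)))"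

definition solution :: "real \<Rightarrow> (nat \<Rightarrow> real) \<Rightarrow> nat \<Rightarrow> (nat \<Rightarrow> pt) \<Rightarrow> bool" where
  "solution \<alpha> x n P \<longleftrightarrow> P 0 = (0,0) \<and> (\<forall>i\<le>n. P i \<in> FCs \<alpha> x i)"

definition OPT :: "real \<Rightarrow> (nat \<Rightarrow> real) \<Rightarrow> nat \<Rightarrow> real" where
  "OPT \<alpha> x n = Inf {cost P n | P. solution \<alpha> x n P}"

primrec hedge :: "real \<Rightarrow> real \<Rightarrow> (nat \<Rightarrow> real) \<Rightarrow> nat \<Rightarrow> pt" where
  "hedge \<alpha> \<beta> x 0 = (0,0)"
| "hedge \<alpha> \<beta> x (Suc i) =
     (let P = hedge \<alpha> \<beta> x i;
          d = (sgn (x (Suc i)) * sin \<beta>, cos \<beta>);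
          ray = (\<lambda>t::real. (fst P + t * fst d, snd P + t * snd d))
      in if P \<in> FCs \<alpha> x (Suc i) then P
         else ray (Inf {t. t \<ge> 0 \<and> ray t \<in> FCs \<alpha> x (Suc i)}))"

definition redundant :: "(nat \<Rightarrow> real) \<Rightarrow> nat \<Rightarrow> bool" where
  "redundant x i \<longleftrightarrow>
     Min (x ` {..i}) \<le> x (Suc i) \<and> x (Suc i) \<le> Max (x ` {..i})"

definition good_input :: "(nat \<Rightarrow> real) \<Rightarrow> nat \<Rightarrow> bool" where
  "good_input x n \<longleftrightarrow> n \<ge> 1 \<and> x 0 = 0 \<and> (\<forall>i<n. \<not> redundant x i)
     \<and> Min (x ` {..n}) = -1 \<and> Max (x ` {..n}) \<in> {0..1}"

definition hedge_ratio :: "real \<Rightarrow> real \<Rightarrow> ereal" where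
  "hedge_ratio \<alpha> \<beta> =
     (SUP xn \<in> {(x,n). good_input x n}.
        ereal (cost (hedge \<alpha> \<beta> (fst xn)) (snd xn) / OPT \<alpha> (fst xn) (snd xn)))"

definition f1 :: "real \<Rightarrow> real \<Rightarrow> real \<Rightarrow> real" where
  "f1 \<alpha> \<beta> r = 2 * sin \<alpha> / (cos \<beta> * (tan \<alpha> + tan \<beta>)) *
     ((1 + (2 * tan \<beta> / (tan \<alpha> + tan \<beta>)) * r) / sqrt (1 + r^2 + 2 * cos (2*\<alpha>) * r))"

definition r0 :: "real \<Rightarrow> real \<Rightarrow> real" where
  "r0 \<alpha> \<beta> = (let A = 2 * tan \<beta> / (tan \<alpha> + tan \<beta>); B = 2 * cos (2*\<alpha>)
              in (2*A - B) / (2 - A*B))"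

definition tfun :: "real \<Rightarrow> real" where
  "tfun \<alpha> = arctan ((sin (3*\<alpha>) - sin \<alpha>) / (3 * cos \<alpha> - cos (3*\<alpha>)))"

end

theory Submission
  imports Defs "HOL-Analysis.Product_Vector"
begin

(* Write p = u + v tan \<alpha> and q = v tan \<alpha> - u for the two ends of the segment [-q, p] covered
   from (u, v). Along a Hedge ray the end on the side of the move advances at rate
   P = sin \<beta> + cos \<beta> tan \<alpha> per unit distance and the other one at rate M = cos \<beta> tan \<alpha> - sin \<beta>,
   while the height grows at rate cos \<beta>; so the cost is the final height divided by cos \<beta>.
   The quantities P p - M q and P q - M p only grow with moves to the right, resp. left, and an
   invariant relating them to the extreme requests bounds the final cost by (1 + A h) / P when
   the requests span [-1, h], A = 2 sin \<beta> / P. On the other side OPT is at least the distance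
   from the origin to the final feasibility cone, attained at its apex unless h < -cos 2\<alpha>.
   The quotient of the two bounds is f1 at max h (-cos 2\<alpha>), and f1 is maximal at r0.
   The input 0, r0, -1 attains the bound; the hypothesis on (\<alpha>, \<beta>) is exactly what makes it
   a good input, namely 0 \<le> r0. *)

(* Max and Min of the requests seen so far are kept atomic; their default simp rules unfold
   inequalities into quantifiers, which gets in the way of the arithmetic below. *)
declare Max_le_iff [simp del] Min_ge_iff [simp del] Max_less_iff [simp del] Min_gr_iff [simp del]
  Max_ge_iff [simp del] Min_le_iff [simp del] Max_gr_iff [simp del] Min_less_iff [simp del]
  minus_Max_eq_Min [simp del] minus_Min_eq_Max [simp del]

section \<open>Feasibility cones, cost and the optimum\<close>

lemma mem_FCs_iff:
  "(u, v) \<in> FCs \<alpha> x i \<longleftrightarrow>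
     0 \<le> v \<and> Max (x ` {..i}) \<le> u + v * tan \<alpha> \<and> u - v * tan \<alpha> \<le> Min (x ` {..i})"
proof -
  have "(u, v) \<in> FCs \<alpha> x i \<longleftrightarrow> (\<forall>j\<le>i. 0 \<le> v \<and> \<bar>u - x j\<bar> \<le> v * tan \<alpha>)"
    unfolding FCs_def FC_def by auto
  also have "\<dots> \<longleftrightarrow> 0 \<le> v \<and> (\<forall>j\<le>i. x j \<le> u + v * tan \<alpha>) \<and> (\<forall>j\<le>i. u - v * tan \<alpha> \<le> x j)"
    by (auto simp: abs_le_iff)
  also have "\<dots> \<longleftrightarrow> 0 \<le> v \<and> Max (x ` {..i}) \<le> u + v * tan \<alpha> \<and> u - v * tan \<alpha> \<le> Min (x ` {..i})"
    by (auto simp: Max_le_iff Min_ge_iff)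
  finally show ?thesis .
qed

lemma FCs_antimono: "i \<le> j \<Longrightarrow> FCs \<alpha> x j \<subseteq> FCs \<alpha> x i"
  unfolding FCs_def by auto

lemma Max_image_atMost_Suc: "Max (x ` {..Suc i}) = max (Max (x ` {..i})) (x (Suc i))"
  for x :: "nat \<Rightarrow> 'a::linorder"
  by (simp add: atMost_Suc max.commute)

lemma Min_image_atMost_Suc: "Min (x ` {..Suc i}) = min (Min (x ` {..i})) (x (Suc i))"
  for x :: "nat \<Rightarrow> 'a::linorder"
  by (simp add: atMost_Suc min.commute)

lemma Min_image_atMost_le_Max: "Min (x ` {..i}) \<le> Max (x ` {..i})"
  for x :: "nat \<Rightarrow> 'a::linorder"
  using Min_le[of "x ` {..i}" "x 0"] Max_ge[of "x ` {..i}" "x 0"] by auto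

lemma extremes_Suc_of_new_max:
  assumes "Max (x ` {..i}) < x (Suc i)"
  shows "Max (x ` {..Suc i}) = x (Suc i)" "Min (x ` {..Suc i}) = Min (x ` {..i})"
proof -
  have "Max (x ` {..i}) \<le> x (Suc i)" "Min (x ` {..i}) \<le> x (Suc i)"
    using assms Min_image_atMost_le_Max[of x i] by (meson less_imp_le order.trans)+
  then have "max (Max (x ` {..i})) (x (Suc i)) = x (Suc i)"
    "min (Min (x ` {..i})) (x (Suc i)) = Min (x ` {..i})"
    by (simp_all add: max_absorb2 min_absorb1)
  then show "Max (x ` {..Suc i}) = x (Suc i)" "Min (x ` {..Suc i}) = Min (x ` {..i})"
    unfolding Max_image_atMost_Suc Min_image_atMost_Suc .
qed

lemma extremes_Suc_of_new_min:
  assumes "x (Suc i) < Min (x ` {..i})"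
  shows "Max (x ` {..Suc i}) = Max (x ` {..i})" "Min (x ` {..Suc i}) = x (Suc i)"
proof -
  have "x (Suc i) \<le> Max (x ` {..i})" "x (Suc i) \<le> Min (x ` {..i})"
    using assms Min_image_atMost_le_Max[of x i] by (meson less_imp_le order.trans)+
  then have "max (Max (x ` {..i})) (x (Suc i)) = Max (x ` {..i})"
    "min (Min (x ` {..i})) (x (Suc i)) = x (Suc i)"
    by (simp_all add: max_absorb1 min_absorb2)
  then show "Max (x ` {..Suc i}) = Max (x ` {..i})" "Min (x ` {..Suc i}) = x (Suc i)"
    unfolding Max_image_atMost_Suc Min_image_atMost_Suc .
qed

lemma request_outside_cover:
  assumes "(u, v) \<in> FCs \<alpha> x i" "(u, v) \<notin> FCs \<alpha> x (Suc i)" "\<not> redundant x i"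
  shows "Max (x ` {..i}) < x (Suc i) \<and> u + v * tan \<alpha> < x (Suc i) \<or>
         x (Suc i) < Min (x ` {..i}) \<and> x (Suc i) < u - v * tan \<alpha>"
proof -
  have feasible: "0 \<le> v" "Max (x ` {..i}) \<le> u + v * tan \<alpha>" "u - v * tan \<alpha> \<le> Min (x ` {..i})"
    using assms(1) by (auto simp: mem_FCs_iff)
  have "x (Suc i) < Min (x ` {..i}) \<or> Max (x ` {..i}) < x (Suc i)"
    using assms(3) unfolding redundant_def by (meson not_le)
  then show ?thesis
  proof
    assume "x (Suc i) < Min (x ` {..i})"
    then show ?thesis
      using assms(2) feasible extremes_Suc_of_new_min[of x i] by (auto simp: mem_FCs_iff)
  next
    assume "Max (x ` {..i}) < x (Suc i)"
    then show ?thesis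
      using assms(2) feasible extremes_Suc_of_new_max[of x i] by (auto simp: mem_FCs_iff)
  qed
qed

lemma good_input_two_requests:
  fixes x :: "nat \<Rightarrow> real"
  assumes "x 0 = 0" "x (Suc 0) = -1"
  shows "good_input x 1 \<and> Max (x ` {..1}) = 0"
  using assms by (simp add: good_input_def redundant_def atMost_Suc)

lemma good_input_three_requests:
  fixes x :: "nat \<Rightarrow> real"
  assumes "x 0 = 0" "x (Suc 0) = R" "x (Suc (Suc 0)) = -1" "0 < R" "R \<le> 1"
  shows "good_input x 2 \<and> Max (x ` {..2}) = R"
proof -
  have images: "x ` {..0} = {0}" "x ` {..Suc 0} = {0, R}" "x ` {..Suc (Suc 0)} = {0, R, -1}"
    using assms(1-3) by (auto simp: atMost_Suc)
  have "\<not> redundant x i" if "i < 2" for i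
  proof -
    from that have "i = 0 \<or> i = Suc 0"
      by auto
    then show ?thesis
      using assms by (auto simp: redundant_def images)
  qed
  then show ?thesis
    using assms by (auto simp: good_input_def images numeral_2_eq_2)
qed

lemma edist_eq_dist: "edist p q = dist p q"
  by (cases p; cases q) (simp add: edist_def dist_Pair_Pair dist_real_def)

lemma edist_ray:
  assumes "0 \<le> T"
  shows "edist (u, v) (u + T * sin \<beta>, v + T * cos \<beta>) = T"
    and "edist (u, v) (u - T * sin \<beta>, v + T * cos \<beta>) = T"
proof -
  have "(u - (u + T * sin \<beta>))\<^sup>2 + (v - (v + T * cos \<beta>))\<^sup>2 = T\<^sup>2"
    "(u - (u - T * sin \<beta>))\<^sup>2 + (v - (v + T * cos \<beta>))\<^sup>2 = T\<^sup>2"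
    by (simp_all add: power_mult_distrib flip: distrib_left)
  then show "edist (u, v) (u + T * sin \<beta>, v + T * cos \<beta>) = T"
    and "edist (u, v) (u - T * sin \<beta>, v + T * cos \<beta>) = T"
    using assms by (simp_all add: edist_def)
qed

lemma cost_Suc: "cost P (Suc i) = cost P i + edist (P i) (P (Suc i))"
  by (simp add: cost_def)

lemma cost_nonneg: "0 \<le> cost P n"
  unfolding cost_def edist_def by (simp add: sum_nonneg)

lemma edist_le_cost: "edist (P 0) (P n) \<le> cost P n"
proof (induction n)
  case 0
  then show ?case by (simp add: cost_def edist_def)
next
  case (Suc n)
  have "edist (P 0) (P (Suc n)) \<le> edist (P 0) (P n) + edist (P n) (P (Suc n))"
    unfolding edist_eq_dist by (rule dist_triangle)
  with Suc show ?case by (simp add: cost_Suc)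
qed

lemma cost_jump:
  assumes "1 \<le> n"
  shows "cost (\<lambda>i. if i = 0 then (0, 0) else p) n = edist (0, 0) p"
  using assms
proof (induction n)
  case (Suc n)
  then show ?case by (cases "n = 0") (simp_all add: cost_Suc cost_def edist_def)
qed simp

lemma OPT_le_edist:
  assumes "x 0 = 0" "1 \<le> n" "p \<in> FCs \<alpha> x n"
  shows "OPT \<alpha> x n \<le> edist (0, 0) p"
proof -
  define Q where "Q i = (if i = 0 then (0, 0) else p)" for i :: nat
  have "Q i \<in> FCs \<alpha> x i" if "i \<le> n" for i
    using assms FCs_antimono[OF that, of \<alpha> x] by (auto simp: Q_def FCs_def FC_def)
  then have "solution \<alpha> x n Q"
    unfolding solution_def by (simp add: Q_def)
  then have "OPT \<alpha> x n \<le> cost Q n"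
    unfolding OPT_def by (intro cInf_lower bdd_belowI[of _ 0]) (auto simp: cost_nonneg)
  also have "cost Q n = edist (0, 0) p"
    unfolding Q_def using assms(2) by (rule cost_jump)
  finally show ?thesis .
qed

lemma le_OPT:
  assumes "solution \<alpha> x n Q" and "\<And>p. p \<in> FCs \<alpha> x n \<Longrightarrow> d \<le> edist (0, 0) p"
  shows "d \<le> OPT \<alpha> x n"
  unfolding OPT_def
proof (rule cInf_greatest)
  show "{cost P n |P. solution \<alpha> x n P} \<noteq> {}"
    using assms(1) by blast
next
  fix c
  assume "c \<in> {cost P n |P. solution \<alpha> x n P}"
  then obtain P where "c = cost P n" "solution \<alpha> x n P" by blast
  then show "d \<le> c"
    using assms(2)[of "P n"] edist_le_cost[of P n] by (auto simp: solution_def)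
qed

section \<open>Distance from the origin to the final cone\<close>

lemma abs_cos_double_less_one:
  assumes "0 < \<alpha>" "\<alpha> < pi / 2"
  shows "\<bar>cos (2 * \<alpha>)\<bar> < 1"
proof -
  have "0 < (sin \<alpha>)\<^sup>2" "0 < (cos \<alpha>)\<^sup>2"
    using assms sin_gt_zero[of \<alpha>] cos_gt_zero_pi[of \<alpha>] by auto
  then show ?thesis
    using sin_cos_squared_add[of \<alpha>] unfolding cos_double abs_less_iff by linarith
qed

lemma four_minus_square_pos:
  fixes B :: real
  assumes "\<bar>B\<bar> < 2"
  shows "0 < 4 - B\<^sup>2"
proof -
  have "0 < (2 - B) * (2 + B)"
    using assms by (intro mult_pos_pos) (auto simp: abs_less_iff)
  then show ?thesis
    by (simp add: power2_eq_square algebra_simps)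
qed

lemma quadratic_pos:
  fixes B r :: real
  assumes "\<bar>B\<bar> < 2"
  shows "0 < 1 + r\<^sup>2 + B * r"
proof -
  have "0 < (2 * r + B)\<^sup>2 + (4 - B\<^sup>2)"
    by (rule add_nonneg_pos[OF zero_le_power2 four_minus_square_pos[OF assms]])
  also have "\<dots> = 4 * (1 + r\<^sup>2 + B * r)"
    by (simp add: power2_eq_square algebra_simps)
  finally show ?thesis by simp
qed

lemma apex_norm_identity:
  fixes s c h :: real
  shows "s\<^sup>2 * (h - 1)\<^sup>2 + c\<^sup>2 * (h + 1)\<^sup>2 = (s\<^sup>2 + c\<^sup>2) * (1 + h\<^sup>2) + 2 * (c\<^sup>2 - s\<^sup>2) * h"
  by (simp add: algebra_simps power2_eq_square)

(* The apex of the cone FC \<alpha> h \<inter> FC \<alpha> (-1). *)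
definition apex :: "real \<Rightarrow> real \<Rightarrow> pt" where
  "apex \<alpha> h = ((h - 1) / 2, (h + 1) / (2 * tan \<alpha>))"

lemma apex_mem_FCs:
  assumes "0 < tan \<alpha>" "Max (x ` {..n}) = h" "Min (x ` {..n}) = -1" "-1 \<le> h"
  shows "apex \<alpha> h \<in> FCs \<alpha> x n"
  using assms unfolding apex_def mem_FCs_iff by (simp add: field_simps)

lemma edist_origin_apex:
  assumes "0 < \<alpha>" "\<alpha> < pi / 2"
  shows "edist (0, 0) (apex \<alpha> h) = sqrt (1 + h\<^sup>2 + 2 * cos (2 * \<alpha>) * h) / (2 * sin \<alpha>)"
proof -
  have s: "0 < sin \<alpha>" and c: "0 < cos \<alpha>"
    using assms sin_gt_zero[of \<alpha>] cos_gt_zero_pi[of \<alpha>] by auto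
  have "((h - 1) / 2)\<^sup>2 + ((h + 1) / (2 * tan \<alpha>))\<^sup>2
      = ((sin \<alpha>)\<^sup>2 * (h - 1)\<^sup>2 + (cos \<alpha>)\<^sup>2 * (h + 1)\<^sup>2) / (2 * sin \<alpha>)\<^sup>2"
    using s c by (simp add: tan_def field_simps power2_eq_square)
  also have "(sin \<alpha>)\<^sup>2 * (h - 1)\<^sup>2 + (cos \<alpha>)\<^sup>2 * (h + 1)\<^sup>2 = 1 + h\<^sup>2 + 2 * cos (2 * \<alpha>) * h"
    using apex_norm_identity[where s = "sin \<alpha>" and c = "cos \<alpha>"] by (simp add: cos_double)
  finally have "((h - 1) / 2)\<^sup>2 + ((h + 1) / (2 * tan \<alpha>))\<^sup>2
      = (1 + h\<^sup>2 + 2 * cos (2 * \<alpha>) * h) / (2 * sin \<alpha>)\<^sup>2" .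
  then have "edist (0, 0) (apex \<alpha> h) = sqrt (1 + h\<^sup>2 + 2 * cos (2 * \<alpha>) * h) / sqrt ((2 * sin \<alpha>)\<^sup>2)"
    by (simp add: apex_def edist_def real_sqrt_divide)
  also have "sqrt ((2 * sin \<alpha>)\<^sup>2) = 2 * sin \<alpha>"
    using s by (simp only: real_sqrt_abs)
  finally show ?thesis .
qed

(* With s = sin \<alpha> and c = cos \<alpha> the apex is (s (h - 1), c (h + 1)) / (2 s), and the left-hand side
   is (2 s)\<^sup>2 |apex|\<^sup>2: every point of the cone has inner product at least |apex|\<^sup>2 with the apex. *)
lemma apex_inner_product_ge:
  assumes "0 < \<alpha>" "\<alpha> < pi / 2" "0 \<le> h" "h \<le> 1" "0 \<le> h + cos (2 * \<alpha>)"
    and "h \<le> u + v * tan \<alpha>" "1 \<le> v * tan \<alpha> - u"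
  shows "1 + h\<^sup>2 + 2 * cos (2 * \<alpha>) * h \<le> 2 * sin \<alpha> * (sin \<alpha> * (h - 1) * u + cos \<alpha> * (h + 1) * v)"
proof -
  define s c w where "s = sin \<alpha>" and "c = cos \<alpha>" and "w = v * tan \<alpha>"
  have sc: "s\<^sup>2 + c\<^sup>2 = 1"
    by (simp add: s_def c_def)
  have c2: "cos (2 * \<alpha>) = c\<^sup>2 - s\<^sup>2"
    unfolding s_def c_def by (rule cos_double)
  have st: "s = c * tan \<alpha>"
    using assms(1,2) cos_gt_zero_pi[of \<alpha>] by (simp add: s_def c_def tan_def)
  have S: "1 + h\<^sup>2 + 2 * cos (2 * \<alpha>) * h = s\<^sup>2 * (h - 1)\<^sup>2 + c\<^sup>2 * (h + 1)\<^sup>2"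
    unfolding apex_norm_identity sc c2 by simp
  have inner: "2 * s * (s * (h - 1) * u + c * (h + 1) * v) = 2 * s\<^sup>2 * (h - 1) * u + 2 * (h + 1) * c\<^sup>2 * w"
    by (simp add: w_def st power2_eq_square algebra_simps)
  have "c\<^sup>2 * (h + 1) + s\<^sup>2 * (h - 1) = (s\<^sup>2 + c\<^sup>2) * h + (c\<^sup>2 - s\<^sup>2)"
    by (simp add: algebra_simps)
  then have slope: "c\<^sup>2 * (h + 1) + s\<^sup>2 * (h - 1) = h + cos (2 * \<alpha>)"
    unfolding sc c2 by simp
  have "2 * s * (s * (h - 1) * u + c * (h + 1) * v) - (1 + h\<^sup>2 + 2 * cos (2 * \<alpha>) * h)
      = (w - u - 1) * (c\<^sup>2 * (h + 1) - s\<^sup>2 * (h - 1))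
        + (w + u - h) * (c\<^sup>2 * (h + 1) + s\<^sup>2 * (h - 1))"
    unfolding inner S by (simp add: power2_eq_square algebra_simps)
  then have "2 * s * (s * (h - 1) * u + c * (h + 1) * v) - (1 + h\<^sup>2 + 2 * cos (2 * \<alpha>) * h)
      = (w - u - 1) * (c\<^sup>2 * (h + 1) - s\<^sup>2 * (h - 1)) + (w + u - h) * (h + cos (2 * \<alpha>))"
    unfolding slope .
  moreover have "0 \<le> (w - u - 1) * (c\<^sup>2 * (h + 1) - s\<^sup>2 * (h - 1))"
  proof -
    have "0 \<le> c\<^sup>2 * (h + 1)" "s\<^sup>2 * (h - 1) \<le> 0"
      using assms(3,4) by (simp_all add: mult_nonneg_nonpos)
    then show ?thesis
      using assms(7) by (intro mult_nonneg_nonneg) (simp_all add: w_def)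
  qed
  moreover have "0 \<le> (w + u - h) * (h + cos (2 * \<alpha>))"
    using assms(5,6) by (simp add: w_def)
  ultimately show ?thesis
    unfolding s_def c_def by linarith
qed

lemma apex_nearest:
  assumes "0 < \<alpha>" "\<alpha> < pi / 2" "0 \<le> h" "h \<le> 1" "0 \<le> h + cos (2 * \<alpha>)"
    and "h \<le> u + v * tan \<alpha>" "1 \<le> v * tan \<alpha> - u"
  shows "1 + h\<^sup>2 + 2 * cos (2 * \<alpha>) * h \<le> (2 * sin \<alpha>)\<^sup>2 * (u\<^sup>2 + v\<^sup>2)"
proof -
  define S a where "S = 1 + h\<^sup>2 + 2 * cos (2 * \<alpha>) * h"
    and "a = sin \<alpha> * (h - 1) * u + cos \<alpha> * (h + 1) * v"
  have inner: "S \<le> 2 * sin \<alpha> * a"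
    unfolding S_def a_def by (rule apex_inner_product_ge[OF assms])
  have "0 < S"
    using quadratic_pos[of "2 * cos (2 * \<alpha>)" h] abs_cos_double_less_one[OF assms(1,2)]
    by (simp add: S_def)
  have cauchy_schwarz: "a\<^sup>2 \<le> S * (u\<^sup>2 + v\<^sup>2)"
  proof -
    have S_eq: "S = (sin \<alpha>)\<^sup>2 * (h - 1)\<^sup>2 + (cos \<alpha>)\<^sup>2 * (h + 1)\<^sup>2"
      using apex_norm_identity[where s = "sin \<alpha>" and c = "cos \<alpha>"] by (simp add: S_def cos_double)
    have "S * (u\<^sup>2 + v\<^sup>2) - a\<^sup>2 = (sin \<alpha> * (h - 1) * v - cos \<alpha> * (h + 1) * u)\<^sup>2"
      unfolding S_eq a_def by (simp add: power2_eq_square algebra_simps)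
    then show ?thesis
      by (metis diff_ge_0_iff_ge zero_le_power2)
  qed
  have "S\<^sup>2 \<le> (2 * sin \<alpha> * a)\<^sup>2"
    by (rule power_mono) (use inner \<open>0 < S\<close> in auto)
  also have "\<dots> = (2 * sin \<alpha>)\<^sup>2 * a\<^sup>2"
    by (simp add: power_mult_distrib)
  also have "\<dots> \<le> (2 * sin \<alpha>)\<^sup>2 * (S * (u\<^sup>2 + v\<^sup>2))"
    by (rule mult_left_mono) (use cauchy_schwarz in auto)
  finally have "S * S \<le> S * ((2 * sin \<alpha>)\<^sup>2 * (u\<^sup>2 + v\<^sup>2))"
    by (simp add: power2_eq_square mult_ac)
  then show ?thesis
    using \<open>0 < S\<close> by (simp add: S_def)
qed

lemma cos_le_edist_origin:
  assumes "0 < \<alpha>" "\<alpha> < pi / 2" "1 \<le> v * tan \<alpha> - u"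
  shows "cos \<alpha> \<le> edist (0, 0) (u, v)"
proof -
  have c: "0 < cos \<alpha>"
    using assms by (simp add: cos_gt_zero_pi)
  have "cos \<alpha> \<le> cos \<alpha> * (v * tan \<alpha> - u)"
    using c assms(3) by simp
  also have "\<dots> = v * sin \<alpha> - u * cos \<alpha>"
    using c by (simp add: tan_def algebra_simps)
  also have "\<dots> \<le> sqrt (u\<^sup>2 + v\<^sup>2)"
  proof (rule real_le_rsqrt)
    have "(u\<^sup>2 + v\<^sup>2) - (v * sin \<alpha> - u * cos \<alpha>)\<^sup>2 = (u * sin \<alpha> + v * cos \<alpha>)\<^sup>2"
      using sin_cos_squared_add[of \<alpha>]
      by (simp add: power2_eq_square algebra_simps) (simp add: power2_eq_square flip: distrib_left)
    then show "(v * sin \<alpha> - u * cos \<alpha>)\<^sup>2 \<le> u\<^sup>2 + v\<^sup>2"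
      by (metis diff_ge_0_iff_ge zero_le_power2)
  qed
  finally show ?thesis by (simp add: edist_def)
qed

lemma edist_apex_le:
  assumes "0 < \<alpha>" "\<alpha> < pi / 2" "0 \<le> h" "h \<le> 1"
    and "h \<le> u + v * tan \<alpha>" "1 \<le> v * tan \<alpha> - u"
  shows "edist (0, 0) (apex \<alpha> (max h (- cos (2 * \<alpha>)))) \<le> edist (0, 0) (u, v)"
proof (cases "0 \<le> h + cos (2 * \<alpha>)")
  case True
  have s: "0 < sin \<alpha>"
    using assms by (simp add: sin_gt_zero)
  have "sqrt (1 + h\<^sup>2 + 2 * cos (2 * \<alpha>) * h) \<le> sqrt ((2 * sin \<alpha>)\<^sup>2 * (u\<^sup>2 + v\<^sup>2))"
    using apex_nearest[OF assms(1-4) True assms(5,6)] by simp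
  then show ?thesis
    using True s edist_origin_apex[OF assms(1,2)]
    by (simp add: edist_def real_sqrt_mult max_absorb1 divide_le_eq mult.commute)
next
  case False
  have "0 < sin (2 * \<alpha>)"
    using assms(1,2) by (simp add: sin_gt_zero)
  moreover have "1 + (- cos (2 * \<alpha>))\<^sup>2 + 2 * cos (2 * \<alpha>) * (- cos (2 * \<alpha>)) = (sin (2 * \<alpha>))\<^sup>2"
    using sin_cos_squared_add[of "2 * \<alpha>"] by (simp add: power2_eq_square)
  ultimately have "edist (0, 0) (apex \<alpha> (- cos (2 * \<alpha>))) = sin (2 * \<alpha>) / (2 * sin \<alpha>)"
    using edist_origin_apex[OF assms(1,2)] by simp
  also have "\<dots> = cos \<alpha>"
    using assms(1,2) sin_gt_zero[of \<alpha>] by (simp add: sin_double)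
  finally have "edist (0, 0) (apex \<alpha> (- cos (2 * \<alpha>))) = cos \<alpha>" .
  then show ?thesis
    using False cos_le_edist_origin[OF assms(1,2,6)] by (simp add: max_absorb2)
qed

section \<open>The maximum of f1 at r0\<close>

(* Tight exactly at z = (2 A - B) / (2 - A B), where (1 + A z) / sqrt (1 + z\<^sup>2 + B z) is maximal. *)
lemma affine_quadratic_identity:
  fixes A B z :: real
  shows "(4 - B\<^sup>2) * (1 + A * z)\<^sup>2 + ((2 - A * B) * z - (2 * A - B))\<^sup>2
    = 4 * (1 - A * B + A\<^sup>2) * (1 + z\<^sup>2 + B * z)"
  by (simp add: power2_eq_square algebra_simps)

lemma affine_at_critical_pos:
  fixes A B :: real
  assumes "\<bar>B\<bar> < 2" "0 < 2 - A * B"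
  shows "0 < 1 + A * ((2 * A - B) / (2 - A * B))"
proof -
  have "0 < (2 * A - B)\<^sup>2 + (4 - B\<^sup>2)"
    by (rule add_nonneg_pos[OF zero_le_power2 four_minus_square_pos[OF assms(1)]])
  also have "\<dots> = 2 * ((2 - A * B) + A * (2 * A - B))"
    by (simp add: power2_eq_square algebra_simps)
  also have "(2 - A * B) + A * (2 * A - B) = (1 + A * ((2 * A - B) / (2 - A * B))) * (2 - A * B)"
    using assms(2) by (simp add: distrib_right)
  finally show ?thesis
    using assms(2) by (simp add: zero_less_mult_iff)
qed

lemma affine_div_sqrt_quadratic_le:
  fixes A B r :: real
  assumes "\<bar>B\<bar> < 2" "0 < 2 - A * B"
  defines "R \<equiv> (2 * A - B) / (2 - A * B)"
  shows "(1 + A * r) / sqrt (1 + r\<^sup>2 + B * r) \<le> (1 + A * R) / sqrt (1 + R\<^sup>2 + B * R)"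
proof -
  define Q where "Q z = 1 + z\<^sup>2 + B * z" for z
  define E where "E = 1 - A * B + A\<^sup>2"
  have Q_pos: "0 < Q z" for z
    using quadratic_pos[OF assms(1)] by (simp add: Q_def)
  have B4: "0 < 4 - B\<^sup>2"
    by (rule four_minus_square_pos[OF assms(1)])
  have key: "(4 - B\<^sup>2) * (1 + A * z)\<^sup>2 + ((2 - A * B) * z - (2 * A - B))\<^sup>2 = 4 * E * Q z" for z
    unfolding E_def Q_def by (rule affine_quadratic_identity)
  have "(2 - A * B) * R = 2 * A - B"
    using assms(2) by (simp add: R_def)
  then have at_R: "(4 - B\<^sup>2) * (1 + A * R)\<^sup>2 = 4 * E * Q R"
    using key[of R] by simp
  have "(4 - B\<^sup>2) * (1 + A * r)\<^sup>2 \<le> 4 * E * Q r"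
    using key[of r] zero_le_power2[of "(2 - A * B) * r - (2 * A - B)"] by linarith
  then have "(1 + A * r)\<^sup>2 / Q r \<le> 4 * E / (4 - B\<^sup>2)"
    using Q_pos[of r] B4 by (simp add: field_simps)
  also have "\<dots> = (1 + A * R)\<^sup>2 / Q R"
    using at_R Q_pos[of R] B4 by (simp add: field_simps)
  finally have "sqrt ((1 + A * r)\<^sup>2 / Q r) \<le> sqrt ((1 + A * R)\<^sup>2 / Q R)"
    by simp
  then have "\<bar>1 + A * r\<bar> / sqrt (Q r) \<le> (1 + A * R) / sqrt (Q R)"
    using affine_at_critical_pos[OF assms(1,2)] by (simp add: R_def real_sqrt_divide)
  moreover have "(1 + A * r) / sqrt (Q r) \<le> \<bar>1 + A * r\<bar> / sqrt (Q r)"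
    using Q_pos[of r] by (intro divide_right_mono) simp_all
  ultimately show ?thesis
    unfolding Q_def by linarith
qed

definition coefA :: "real \<Rightarrow> real \<Rightarrow> real" where
  "coefA \<alpha> \<beta> = 2 * tan \<beta> / (tan \<alpha> + tan \<beta>)"

lemma f1_eq: "f1 \<alpha> \<beta> r =
    2 * sin \<alpha> / (cos \<beta> * (tan \<alpha> + tan \<beta>)) * ((1 + coefA \<alpha> \<beta> * r) / sqrt (1 + r\<^sup>2 + 2 * cos (2 * \<alpha>) * r))"
  unfolding f1_def coefA_def ..

lemma r0_eq: "r0 \<alpha> \<beta> =
    (2 * coefA \<alpha> \<beta> - 2 * cos (2 * \<alpha>)) / (2 - coefA \<alpha> \<beta> * (2 * cos (2 * \<alpha>)))"
  unfolding r0_def coefA_def Let_def ..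

lemma coefA_bounds:
  assumes "0 < \<alpha>" "\<alpha> < pi / 2" "0 \<le> \<beta>" "\<beta> \<le> \<alpha>"
  shows "0 \<le> coefA \<alpha> \<beta>" "coefA \<alpha> \<beta> \<le> 1"
proof -
  have "0 < tan \<alpha>" "0 \<le> tan \<beta>" "tan \<beta> \<le> tan \<alpha>"
    using assms tan_mono_le[of 0 \<beta>] tan_mono_le[of \<beta> \<alpha>] by (auto simp: tan_gt_zero)
  then show "0 \<le> coefA \<alpha> \<beta>" "coefA \<alpha> \<beta> \<le> 1"
    by (simp_all add: coefA_def)
qed

lemma coefA_times_double_cos_less:
  assumes "0 < \<alpha>" "\<alpha> < pi / 2" "0 \<le> \<beta>" "\<beta> \<le> \<alpha>"
  shows "coefA \<alpha> \<beta> * (2 * cos (2 * \<alpha>)) < 2"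
proof -
  have "coefA \<alpha> \<beta> * (2 * cos (2 * \<alpha>)) \<le> coefA \<alpha> \<beta> * \<bar>2 * cos (2 * \<alpha>)\<bar>"
    using coefA_bounds[OF assms] by (intro mult_left_mono) auto
  also have "\<dots> \<le> \<bar>2 * cos (2 * \<alpha>)\<bar>"
    using coefA_bounds[OF assms] by (simp add: mult_left_le_one_le)
  finally have "coefA \<alpha> \<beta> * (2 * cos (2 * \<alpha>)) \<le> \<bar>2 * cos (2 * \<alpha>)\<bar>" .
  then show ?thesis
    using abs_cos_double_less_one[OF assms(1,2)] by simp
qed

lemma f1_le_f1_r0:
  assumes "0 < \<alpha>" "\<alpha> < pi / 2" "0 \<le> \<beta>" "\<beta> \<le> \<alpha>"
  shows "f1 \<alpha> \<beta> r \<le> f1 \<alpha> \<beta> (r0 \<alpha> \<beta>)"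
proof -
  have "0 \<le> 2 * sin \<alpha> / (cos \<beta> * (tan \<alpha> + tan \<beta>))"
    using assms sin_gt_zero[of \<alpha>] cos_gt_zero_pi[of \<beta>] tan_gt_zero[of \<alpha>] tan_mono_le[of 0 \<beta>]
    by simp
  moreover have "\<bar>2 * cos (2 * \<alpha>)\<bar> < 2"
    using abs_cos_double_less_one[OF assms(1,2)] by simp
  ultimately show ?thesis
    unfolding f1_eq r0_eq
    by (intro mult_left_mono affine_div_sqrt_quadratic_le)
      (use coefA_times_double_cos_less[OF assms] in auto)
qed

lemma r0_le_one:
  assumes "0 < \<alpha>" "\<alpha> < pi / 2" "0 \<le> \<beta>" "\<beta> \<le> \<alpha>"
  shows "r0 \<alpha> \<beta> \<le> 1"
proof -
  let ?A = "coefA \<alpha> \<beta>" and ?B = "2 * cos (2 * \<alpha>)"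
  have "0 \<le> (1 - ?A) * (2 + ?B)"
    using coefA_bounds[OF assms] abs_cos_double_less_one[OF assms(1,2)] by simp
  then have "2 * ?A - ?B \<le> 2 - ?A * ?B"
    by (simp add: algebra_simps)
  then show ?thesis
    unfolding r0_eq using coefA_times_double_cos_less[OF assms] by simp
qed

lemma tan_tfun:
  assumes "0 < \<alpha>" "\<alpha> < pi / 2"
  shows "tan (tfun \<alpha>) = tan \<alpha> * cos (2 * \<alpha>) / (2 - cos (2 * \<alpha>))"
proof -
  have c: "0 < cos \<alpha>"
    using assms by (simp add: cos_gt_zero_pi)
  have c2: "cos (2 * \<alpha>) = 2 * (cos \<alpha>)\<^sup>2 - 1"
    by (rule cos_double_cos)
  have "sin (3 * \<alpha>) = sin (2 * \<alpha> + \<alpha>)"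
    by simp
  also have "\<dots> = sin \<alpha> * (2 * (cos \<alpha>)\<^sup>2 + cos (2 * \<alpha>))"
    unfolding sin_add sin_double by (simp add: algebra_simps power2_eq_square)
  finally have sin3: "sin (3 * \<alpha>) - sin \<alpha> = 2 * sin \<alpha> * cos (2 * \<alpha>)"
    by (simp only: c2) (simp add: algebra_simps)
  have cos3: "3 * cos \<alpha> - cos (3 * \<alpha>) = 2 * cos \<alpha> * (2 - cos (2 * \<alpha>))"
    unfolding cos_treble_cos c2 by (simp add: algebra_simps power2_eq_square power3_eq_cube)
  have "0 < 2 - cos (2 * \<alpha>)"
    using cos_le_one[of "2 * \<alpha>"] by linarith
  have "tan (tfun \<alpha>) = (sin (3 * \<alpha>) - sin \<alpha>) / (3 * cos \<alpha> - cos (3 * \<alpha>))"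
    unfolding tfun_def tan_arctan ..
  also have "\<dots> = tan \<alpha> * cos (2 * \<alpha>) / (2 - cos (2 * \<alpha>))"
    unfolding sin3 cos3 tan_def using c \<open>0 < 2 - cos (2 * \<alpha>)\<close> by (simp add: field_simps)
  finally show ?thesis .
qed

lemma tfun_nonneg:
  assumes "0 < \<alpha>" "\<alpha> \<le> pi / 4"
  shows "0 \<le> tfun \<alpha>"
proof -
  have "0 \<le> cos (2 * \<alpha>)"
    using assms by (intro cos_ge_zero) auto
  moreover have "0 < 2 - cos (2 * \<alpha>)"
    using cos_le_one[of "2 * \<alpha>"] by linarith
  moreover have "0 < tan \<alpha>"
    using assms by (simp add: tan_gt_zero)
  ultimately have "0 \<le> tan (tfun \<alpha>)"
    using assms by (simp add: tan_tfun)
  then show ?thesis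
    unfolding tfun_def tan_arctan by simp
qed

lemma r0_nonneg:
  assumes "0 < \<alpha>" "\<alpha> < pi / 2" "0 \<le> \<beta>" "\<beta> \<le> \<alpha>" and "pi / 4 \<le> \<alpha> \<or> tfun \<alpha> \<le> \<beta>"
  shows "0 \<le> r0 \<alpha> \<beta>"
proof -
  have "cos (2 * \<alpha>) \<le> coefA \<alpha> \<beta>"
    using assms(5)
  proof
    assume "pi / 4 \<le> \<alpha>"
    then have "cos (2 * \<alpha>) \<le> cos (pi / 2)"
      using assms(2) by (subst cos_mono_le_eq) auto
    then show ?thesis
      using coefA_bounds[OF assms(1-4)] by simp
  next
    assume "tfun \<alpha> \<le> \<beta>"
    then have "tan (tfun \<alpha>) \<le> tan \<beta>"
      using assms(2,4) by (intro tan_mono_le) (auto simp: tfun_def arctan_lbound)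
    moreover have "0 < 2 - cos (2 * \<alpha>)"
      using cos_le_one[of "2 * \<alpha>"] by linarith
    ultimately have "cos (2 * \<alpha>) * (tan \<alpha> + tan \<beta>) \<le> 2 * tan \<beta>"
      using assms(1,2) by (simp add: tan_tfun field_simps)
    moreover have "0 < tan \<alpha> + tan \<beta>"
      using assms tan_gt_zero[of \<alpha>] tan_mono_le[of 0 \<beta>] by simp
    ultimately show ?thesis
      by (simp add: coefA_def field_simps)
  qed
  then show ?thesis
    unfolding r0_eq using coefA_times_double_cos_less[OF assms(1-4)] by simp
qed

section \<open>The Hedge algorithm\<close>

lemma Inf_ray_entry:
  fixes P p y :: real
  assumes "0 < P" "p < y" "\<And>t. 0 \<le> t \<Longrightarrow> ray t \<in> C \<longleftrightarrow> y \<le> p + t * P"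
  shows "Inf {t. 0 \<le> t \<and> ray t \<in> C} = (y - p) / P"
proof -
  have pos: "0 < (y - p) / P"
    using assms(1,2) by simp
  have entry: "(y - p) / P \<le> t \<longleftrightarrow> y \<le> p + t * P" for t
    using assms(1) by (simp add: pos_divide_le_eq algebra_simps)
  have "0 \<le> t \<and> ray t \<in> C \<longleftrightarrow> (y - p) / P \<le> t" for t
  proof (cases "0 \<le> t")
    case True
    then show ?thesis using assms(3) entry by simp
  next
    case False
    then show ?thesis using pos by simp
  qed
  then have "{t. 0 \<le> t \<and> ray t \<in> C} = {(y - p) / P..}" by auto
  then show ?thesis by simp
qed

(* Moving a distance t along the Hedge ray towards a request on the right, the right end
   u + v tan \<alpha> of the covered segment advances by t * lead_rate and the left end u - v tan \<alpha>
   recedes by t * trail_rate; symmetrically for a request on the left. *)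
definition lead_rate :: "real \<Rightarrow> real \<Rightarrow> real" where
  "lead_rate \<alpha> \<beta> = sin \<beta> + cos \<beta> * tan \<alpha>"

definition trail_rate :: "real \<Rightarrow> real \<Rightarrow> real" where
  "trail_rate \<alpha> \<beta> = cos \<beta> * tan \<alpha> - sin \<beta>"

(* [-q, p] is the covered segment and [-l, h] the span of the requests. A move advancing p by
   T P and q by T M adds T (P\<^sup>2 - M\<^sup>2) to P p - M q and leaves P q - M p unchanged. *)
definition reach_invariant :: "real \<Rightarrow> real \<Rightarrow> real \<Rightarrow> real \<Rightarrow> real \<Rightarrow> real \<Rightarrow> bool" where
  "reach_invariant P M p q h l \<longleftrightarrow> h \<le> p \<and> l \<le> q \<and> (q \<le> l \<or> p \<le> h) \<and>
     0 \<le> P * p - M * q \<and> 0 \<le> P * q - M * p \<and>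
     P * (P * p - M * q) \<le> (P\<^sup>2 - M\<^sup>2) * h \<and> P * (P * q - M * p) \<le> (P\<^sup>2 - M\<^sup>2) * l"

lemma reach_invariant_swap: "reach_invariant P M p q h l \<longleftrightarrow> reach_invariant P M q p l h"
  unfolding reach_invariant_def by auto

lemma reach_invariant_widen:
  assumes "reach_invariant P M p q h l" "h \<le> h'" "l \<le> l'" "h' \<le> p" "l' \<le> q" "M\<^sup>2 \<le> P\<^sup>2"
  shows "reach_invariant P M p q h' l'"
proof -
  have "(P\<^sup>2 - M\<^sup>2) * h \<le> (P\<^sup>2 - M\<^sup>2) * h'" "(P\<^sup>2 - M\<^sup>2) * l \<le> (P\<^sup>2 - M\<^sup>2) * l'"
    using assms by (simp_all add: mult_left_mono)
  then show ?thesis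
    using assms unfolding reach_invariant_def by auto
qed

lemma reach_invariant_advance:
  assumes "reach_invariant P M p q h l" "0 \<le> M" "M \<le> P" "0 \<le> T"
  shows "reach_invariant P M (p + T * P) (q + T * M) (p + T * P) l"
proof -
  have "0 \<le> T * (P\<^sup>2 - M\<^sup>2)"
    using assms(2-4) by (simp add: power_mono)
  moreover have "P * (q + T * M) - M * (p + T * P) = P * q - M * p"
    by (simp add: algebra_simps)
  moreover have "P * (p + T * P) - M * (q + T * M) = (P * p - M * q) + T * (P\<^sup>2 - M\<^sup>2)"
    by (simp add: algebra_simps power2_eq_square)
  moreover have "P * (P * (p + T * P) - M * (q + T * M))
      = (P\<^sup>2 - M\<^sup>2) * (p + T * P) - M * (P * q - M * p)"
    by (simp add: algebra_simps power2_eq_square)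
  moreover have "0 \<le> M * (P * q - M * p)" "q \<le> q + T * M"
    using assms unfolding reach_invariant_def by simp_all
  ultimately show ?thesis
    using assms(1) unfolding reach_invariant_def by auto
qed

lemma reach_invariant_sum_le:
  assumes "reach_invariant P M p q h 1" "0 < P" "0 \<le> M" "M \<le> P" "0 \<le> h" "h \<le> 1"
  shows "P\<^sup>2 * (p + q) \<le> (P + M) * (P + (P - M) * h)"
proof -
  have bounds: "P * (P * p - M * q) \<le> (P\<^sup>2 - M\<^sup>2) * h" "P * (P * q - M * p) \<le> P\<^sup>2 - M\<^sup>2"
    "q \<le> 1 \<or> p \<le> h"
    using assms(1) unfolding reach_invariant_def by auto
  have target: "(P + M) * (P + (P - M) * h) = P\<^sup>2 + P * M + (P\<^sup>2 - M\<^sup>2) * h"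
    by (simp add: algebra_simps power2_eq_square)
  from bounds(3) show ?thesis
  proof
    assume "q \<le> 1"
    have "P\<^sup>2 * (p + q) = P * (P * p - M * q) + (P * M + P\<^sup>2) * q"
      by (simp add: algebra_simps power2_eq_square)
    also have "\<dots> \<le> (P\<^sup>2 - M\<^sup>2) * h + (P * M + P\<^sup>2) * 1"
      using bounds(1) \<open>q \<le> 1\<close> assms(2,3) by (intro add_mono mult_left_mono) auto
    finally show ?thesis
      unfolding target by simp
  next
    assume "p \<le> h"
    have "P\<^sup>2 * (p + q) = P * (P * q - M * p) + (P * M + P\<^sup>2) * p"
      by (simp add: algebra_simps power2_eq_square)
    also have "\<dots> \<le> (P\<^sup>2 - M\<^sup>2) + (P * M + P\<^sup>2) * h"
      using bounds(2) \<open>p \<le> h\<close> assms(2,3) by (intro add_mono mult_left_mono) auto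
    also have "\<dots> \<le> P\<^sup>2 + P * M + (P\<^sup>2 - M\<^sup>2) * h"
    proof -
      have "0 \<le> M * (P + M) * (1 - h)"
        using assms by simp
      then show ?thesis
        by (simp add: algebra_simps power2_eq_square)
    qed
    finally show ?thesis
      unfolding target by simp
  qed
qed

lemma feasible_of_reach_invariant:
  assumes "0 \<le> v"
    and "reach_invariant P M (u + v * tan \<alpha>) (v * tan \<alpha> - u) (Max (x ` {..i})) (- Min (x ` {..i}))"
  shows "(u, v) \<in> FCs \<alpha> x i"
  using assms unfolding mem_FCs_iff reach_invariant_def by auto

definition hedge_state :: "real \<Rightarrow> real \<Rightarrow> (nat \<Rightarrow> real) \<Rightarrow> nat \<Rightarrow> real \<Rightarrow> real \<Rightarrow> bool" where
  "hedge_state \<alpha> \<beta> x i u v \<longleftrightarrow> v = cos \<beta> * cost (hedge \<alpha> \<beta> x) i \<and>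
     reach_invariant (lead_rate \<alpha> \<beta>) (trail_rate \<alpha> \<beta>) (u + v * tan \<alpha>) (v * tan \<alpha> - u)
       (Max (x ` {..i})) (- Min (x ` {..i}))"

context
  fixes \<alpha> \<beta> :: real
  assumes angles: "0 < \<alpha>" "\<alpha> < pi / 2" "0 \<le> \<beta>" "\<beta> \<le> \<alpha>"
begin

lemma angle_trig_signs: "0 < tan \<alpha>" "0 < sin \<alpha>" "0 < cos \<alpha>" "0 < cos \<beta>" "0 \<le> sin \<beta>"
  using angles by (auto simp: tan_gt_zero sin_gt_zero cos_gt_zero_pi sin_ge_zero)

lemma lead_rate_eq: "lead_rate \<alpha> \<beta> = cos \<beta> * (tan \<alpha> + tan \<beta>)"
  using angle_trig_signs by (simp add: lead_rate_def tan_def field_simps)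

lemma lead_rate_pos: "0 < lead_rate \<alpha> \<beta>"
  using angle_trig_signs by (simp add: lead_rate_def add_nonneg_pos)

lemma trail_rate_nonneg: "0 \<le> trail_rate \<alpha> \<beta>"
proof -
  have "sin \<beta> / cos \<beta> \<le> tan \<alpha>"
    using angles tan_mono_le[of \<beta> \<alpha>] by (simp add: tan_def)
  then show ?thesis
    using angle_trig_signs by (simp add: trail_rate_def pos_divide_le_eq mult.commute)
qed

lemma trail_rate_le_lead_rate: "trail_rate \<alpha> \<beta> \<le> lead_rate \<alpha> \<beta>"
  using angle_trig_signs by (simp add: trail_rate_def lead_rate_def)

lemma coefA_eq: "coefA \<alpha> \<beta> = 2 * sin \<beta> / lead_rate \<alpha> \<beta>"
proof -
  have "coefA \<alpha> \<beta> = 2 * (tan \<beta> * cos \<beta>) / (cos \<beta> * (tan \<alpha> + tan \<beta>))"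
    using angle_trig_signs by (simp add: coefA_def)
  then show ?thesis
    using angle_trig_signs by (simp add: lead_rate_eq tan_def)
qed

lemma hedge_Suc_right:
  assumes "hedge \<alpha> \<beta> x i = (u, v)" "(u, v) \<in> FCs \<alpha> x i"
    and "x 0 = 0" "Max (x ` {..i}) < x (Suc i)" "u + v * tan \<alpha> < x (Suc i)"
  defines "T \<equiv> (x (Suc i) - (u + v * tan \<alpha>)) / lead_rate \<alpha> \<beta>"
  shows "hedge \<alpha> \<beta> x (Suc i) = (u + T * sin \<beta>, v + T * cos \<beta>)"
proof -
  let ?y = "x (Suc i)"
  have feasible: "0 \<le> v" "u - v * tan \<alpha> \<le> Min (x ` {..i})"
    using assms(2) by (auto simp: mem_FCs_iff)
  note extremes = extremes_Suc_of_new_max[OF assms(4)]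
  have entry: "(u + t * sin \<beta>, v + t * cos \<beta>) \<in> FCs \<alpha> x (Suc i) \<longleftrightarrow>
      ?y \<le> (u + v * tan \<alpha>) + t * lead_rate \<alpha> \<beta>" if "0 \<le> t" for t
  proof -
    have "0 \<le> t * cos \<beta>" "0 \<le> t * trail_rate \<alpha> \<beta>"
      using that angle_trig_signs trail_rate_nonneg by simp_all
    moreover have "u + t * sin \<beta> + (v + t * cos \<beta>) * tan \<alpha> = (u + v * tan \<alpha>) + t * lead_rate \<alpha> \<beta>"
      "u + t * sin \<beta> - (v + t * cos \<beta>) * tan \<alpha> = (u - v * tan \<alpha>) - t * trail_rate \<alpha> \<beta>"
      by (simp_all add: lead_rate_def trail_rate_def algebra_simps)
    ultimately show ?thesis
      using feasible unfolding mem_FCs_iff extremes by auto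
  qed
  have "x 0 \<le> Max (x ` {..i})"
    by (rule Max_ge) auto
  then have "0 < ?y"
    using assms(3,4) by linarith
  moreover have "(u, v) \<notin> FCs \<alpha> x (Suc i)"
    using assms(5) by (simp add: mem_FCs_iff extremes)
  ultimately show ?thesis
    using assms(1) Inf_ray_entry[OF lead_rate_pos assms(5) entry] by (simp add: T_def Let_def)
qed

lemma hedge_Suc_left:
  assumes "hedge \<alpha> \<beta> x i = (u, v)" "(u, v) \<in> FCs \<alpha> x i"
    and "x 0 = 0" "x (Suc i) < Min (x ` {..i})" "x (Suc i) < u - v * tan \<alpha>"
  defines "T \<equiv> (- x (Suc i) - (v * tan \<alpha> - u)) / lead_rate \<alpha> \<beta>"
  shows "hedge \<alpha> \<beta> x (Suc i) = (u - T * sin \<beta>, v + T * cos \<beta>)"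
proof -
  let ?y = "x (Suc i)"
  have feasible: "0 \<le> v" "Max (x ` {..i}) \<le> u + v * tan \<alpha>"
    using assms(2) by (auto simp: mem_FCs_iff)
  note extremes = extremes_Suc_of_new_min[OF assms(4)]
  have uncovered: "v * tan \<alpha> - u < - ?y"
    using assms(5) by simp
  have entry: "(u - t * sin \<beta>, v + t * cos \<beta>) \<in> FCs \<alpha> x (Suc i) \<longleftrightarrow>
      - ?y \<le> (v * tan \<alpha> - u) + t * lead_rate \<alpha> \<beta>" if "0 \<le> t" for t
  proof -
    have "0 \<le> t * cos \<beta>" "0 \<le> t * trail_rate \<alpha> \<beta>"
      using that angle_trig_signs trail_rate_nonneg by simp_all
    moreover have "u - t * sin \<beta> + (v + t * cos \<beta>) * tan \<alpha> = (u + v * tan \<alpha>) + t * trail_rate \<alpha> \<beta>"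
      "u - t * sin \<beta> - (v + t * cos \<beta>) * tan \<alpha> = - ((v * tan \<alpha> - u) + t * lead_rate \<alpha> \<beta>)"
      by (simp_all add: lead_rate_def trail_rate_def algebra_simps)
    ultimately show ?thesis
      using feasible unfolding mem_FCs_iff extremes by auto
  qed
  have "Min (x ` {..i}) \<le> x 0"
    by (rule Min_le) auto
  then have "?y < 0"
    using assms(3,4) by linarith
  moreover have "(u, v) \<notin> FCs \<alpha> x (Suc i)"
    using assms(5) by (simp add: mem_FCs_iff extremes)
  ultimately show ?thesis
    using assms(1) Inf_ray_entry[OF lead_rate_pos uncovered entry] by (simp add: T_def Let_def)
qed

lemma reach_after_move:
  "u + T * sin \<beta> + (v + T * cos \<beta>) * tan \<alpha> = (u + v * tan \<alpha>) + T * lead_rate \<alpha> \<beta>"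
  "(v + T * cos \<beta>) * tan \<alpha> - (u + T * sin \<beta>) = (v * tan \<alpha> - u) + T * trail_rate \<alpha> \<beta>"
  "u - T * sin \<beta> + (v + T * cos \<beta>) * tan \<alpha> = (u + v * tan \<alpha>) + T * trail_rate \<alpha> \<beta>"
  "(v + T * cos \<beta>) * tan \<alpha> - (u - T * sin \<beta>) = (v * tan \<alpha> - u) + T * lead_rate \<alpha> \<beta>"
  by (simp_all add: lead_rate_def trail_rate_def algebra_simps)

lemma hedge_stateD:
  assumes "hedge_state \<alpha> \<beta> x i u v"
  shows "v = cos \<beta> * cost (hedge \<alpha> \<beta> x) i"
    and "reach_invariant (lead_rate \<alpha> \<beta>) (trail_rate \<alpha> \<beta>) (u + v * tan \<alpha>) (v * tan \<alpha> - u)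
      (Max (x ` {..i})) (- Min (x ` {..i}))"
  using assms unfolding hedge_state_def by blast+

lemma feasible_of_hedge_state:
  assumes "hedge_state \<alpha> \<beta> x i u v"
  shows "(u, v) \<in> FCs \<alpha> x i"
proof (rule feasible_of_reach_invariant)
  show "0 \<le> v"
    using hedge_stateD(1)[OF assms] angle_trig_signs(4) cost_nonneg by simp
qed (rule hedge_stateD(2)[OF assms])

lemma hedge_state_Suc_stay:
  assumes "hedge_state \<alpha> \<beta> x i u v" "hedge \<alpha> \<beta> x i = (u, v)" "(u, v) \<in> FCs \<alpha> x (Suc i)"
  shows "hedge_state \<alpha> \<beta> x (Suc i) u v"
proof -
  have "hedge \<alpha> \<beta> x (Suc i) = (u, v)"
    using assms(2,3) by (simp add: Let_def)
  then have "v = cos \<beta> * cost (hedge \<alpha> \<beta> x) (Suc i)"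
    using assms(2) hedge_stateD(1)[OF assms(1)] by (simp add: cost_Suc edist_def)
  moreover have "reach_invariant (lead_rate \<alpha> \<beta>) (trail_rate \<alpha> \<beta>) (u + v * tan \<alpha>) (v * tan \<alpha> - u)
      (Max (x ` {..Suc i})) (- Min (x ` {..Suc i}))"
  proof (rule reach_invariant_widen[OF hedge_stateD(2)[OF assms(1)]])
    show "Max (x ` {..i}) \<le> Max (x ` {..Suc i})" "- Min (x ` {..i}) \<le> - Min (x ` {..Suc i})"
      unfolding Max_image_atMost_Suc Min_image_atMost_Suc by simp_all
    show "Max (x ` {..Suc i}) \<le> u + v * tan \<alpha>" "- Min (x ` {..Suc i}) \<le> v * tan \<alpha> - u"
      using assms(3) by (auto simp: mem_FCs_iff)
    show "(trail_rate \<alpha> \<beta>)\<^sup>2 \<le> (lead_rate \<alpha> \<beta>)\<^sup>2"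
      using trail_rate_nonneg trail_rate_le_lead_rate by (simp add: power_mono)
  qed
  ultimately show ?thesis
    unfolding hedge_state_def ..
qed

lemma hedge_state_Suc_right:
  assumes "hedge_state \<alpha> \<beta> x i u0 v0" "hedge \<alpha> \<beta> x i = (u0, v0)" "(u0, v0) \<in> FCs \<alpha> x i"
    and "x 0 = 0" "Max (x ` {..i}) < x (Suc i)" "u0 + v0 * tan \<alpha> < x (Suc i)"
    and "hedge \<alpha> \<beta> x (Suc i) = (u, v)"
  shows "hedge_state \<alpha> \<beta> x (Suc i) u v"
proof -
  let ?P = "lead_rate \<alpha> \<beta>" and ?M = "trail_rate \<alpha> \<beta>" and ?y = "x (Suc i)"
  define T where "T = (?y - (u0 + v0 * tan \<alpha>)) / ?P"
  have T: "0 \<le> T" "(u0 + v0 * tan \<alpha>) + T * ?P = ?y"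
    using assms(6) lead_rate_pos by (simp_all add: T_def)
  have "(u, v) = (u0 + T * sin \<beta>, v0 + T * cos \<beta>)"
    using hedge_Suc_right[OF assms(2-6)] assms(7) by (simp add: T_def)
  then have uv: "u = u0 + T * sin \<beta>" "v = v0 + T * cos \<beta>"
    by simp_all
  have step: "edist (u0, v0) (u, v) = T" "u + v * tan \<alpha> = ?y"
    "v * tan \<alpha> - u = (v0 * tan \<alpha> - u0) + T * ?M"
    unfolding uv reach_after_move(1,2) by (rule edist_ray(1)[OF T(1)], rule T(2), rule refl)
  have "v = cos \<beta> * cost (hedge \<alpha> \<beta> x) (Suc i)"
  proof -
    have "cost (hedge \<alpha> \<beta> x) (Suc i) = cost (hedge \<alpha> \<beta> x) i + T"
      using assms(2,7) step(1) by (simp add: cost_Suc)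
    then show ?thesis
      using hedge_stateD(1)[OF assms(1)] uv(2) by (simp add: algebra_simps)
  qed
  moreover have "reach_invariant ?P ?M (u + v * tan \<alpha>) (v * tan \<alpha> - u)
      (Max (x ` {..Suc i})) (- Min (x ` {..Suc i}))"
    using reach_invariant_advance[OF hedge_stateD(2)[OF assms(1)] trail_rate_nonneg
        trail_rate_le_lead_rate T(1)]
      T(2) step extremes_Suc_of_new_max[OF assms(5)] by simp
  ultimately show ?thesis
    unfolding hedge_state_def ..
qed

lemma hedge_state_Suc_left:
  assumes "hedge_state \<alpha> \<beta> x i u0 v0" "hedge \<alpha> \<beta> x i = (u0, v0)" "(u0, v0) \<in> FCs \<alpha> x i"
    and "x 0 = 0" "x (Suc i) < Min (x ` {..i})" "x (Suc i) < u0 - v0 * tan \<alpha>"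
    and "hedge \<alpha> \<beta> x (Suc i) = (u, v)"
  shows "hedge_state \<alpha> \<beta> x (Suc i) u v"
proof -
  let ?P = "lead_rate \<alpha> \<beta>" and ?M = "trail_rate \<alpha> \<beta>" and ?y = "x (Suc i)"
  define T where "T = (- ?y - (v0 * tan \<alpha> - u0)) / ?P"
  have T: "0 \<le> T" "(v0 * tan \<alpha> - u0) + T * ?P = - ?y"
    using assms(6) lead_rate_pos by (simp_all add: T_def)
  have "(u, v) = (u0 - T * sin \<beta>, v0 + T * cos \<beta>)"
    using hedge_Suc_left[OF assms(2-6)] assms(7) by (simp add: T_def)
  then have uv: "u = u0 - T * sin \<beta>" "v = v0 + T * cos \<beta>"
    by simp_all
  have step: "edist (u0, v0) (u, v) = T" "u + v * tan \<alpha> = (u0 + v0 * tan \<alpha>) + T * ?M"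
    "v * tan \<alpha> - u = - ?y"
    unfolding uv reach_after_move(3,4) by (rule edist_ray(2)[OF T(1)], rule refl, rule T(2))
  have "v = cos \<beta> * cost (hedge \<alpha> \<beta> x) (Suc i)"
  proof -
    have "cost (hedge \<alpha> \<beta> x) (Suc i) = cost (hedge \<alpha> \<beta> x) i + T"
      using assms(2,7) step(1) by (simp add: cost_Suc)
    then show ?thesis
      using hedge_stateD(1)[OF assms(1)] uv(2) by (simp add: algebra_simps)
  qed
  moreover have "reach_invariant ?P ?M (u + v * tan \<alpha>) (v * tan \<alpha> - u)
      (Max (x ` {..Suc i})) (- Min (x ` {..Suc i}))"
  proof (rule reach_invariant_swap[THEN iffD2])
    show "reach_invariant ?P ?M (v * tan \<alpha> - u) (u + v * tan \<alpha>)
        (- Min (x ` {..Suc i})) (Max (x ` {..Suc i}))"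
      using reach_invariant_advance[OF reach_invariant_swap[THEN iffD1, OF hedge_stateD(2)[OF assms(1)]]
          trail_rate_nonneg trail_rate_le_lead_rate T(1)]
        T(2) step extremes_Suc_of_new_min[OF assms(5)] by simp
  qed
  ultimately show ?thesis
    unfolding hedge_state_def ..
qed

lemma hedge_state_invariant:
  assumes "x 0 = 0" "\<forall>j<i. \<not> redundant x j" "hedge \<alpha> \<beta> x i = (u, v)"
  shows "hedge_state \<alpha> \<beta> x i u v"
  using assms(2,3)
proof (induction i arbitrary: u v)
  case 0
  then show ?case
    using assms(1) by (simp add: hedge_state_def cost_def reach_invariant_def)
next
  case (Suc i)
  obtain u0 v0 where H0: "hedge \<alpha> \<beta> x i = (u0, v0)"
    by (cases "hedge \<alpha> \<beta> x i")
  have state0: "hedge_state \<alpha> \<beta> x i u0 v0"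
    using Suc.IH[OF _ H0] Suc.prems(1) by simp
  then have feasible0: "(u0, v0) \<in> FCs \<alpha> x i"
    using feasible_of_hedge_state by blast
  show ?case
  proof (cases "(u0, v0) \<in> FCs \<alpha> x (Suc i)")
    case True
    then show ?thesis
      using hedge_state_Suc_stay[OF state0 H0] H0 Suc.prems(2) by (simp add: Let_def)
  next
    case False
    then show ?thesis
      using request_outside_cover[OF feasible0 False] Suc.prems
        hedge_state_Suc_right[OF state0 H0 feasible0 assms(1)]
        hedge_state_Suc_left[OF state0 H0 feasible0 assms(1)]
      by auto
  qed
qed

lemma hedge_solution:
  assumes "x 0 = 0" "\<forall>i<n. \<not> redundant x i"
  shows "solution \<alpha> x n (hedge \<alpha> \<beta> x)"
  unfolding solution_def
proof (intro conjI allI impI)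
  fix i
  assume "i \<le> n"
  obtain u v where H: "hedge \<alpha> \<beta> x i = (u, v)"
    by (cases "hedge \<alpha> \<beta> x i")
  then show "hedge \<alpha> \<beta> x i \<in> FCs \<alpha> x i"
    using feasible_of_hedge_state hedge_state_invariant[OF assms(1) _ H] assms(2) \<open>i \<le> n\<close> by simp
qed simp

lemma hedge_cost_le:
  assumes "good_input x n"
  shows "cost (hedge \<alpha> \<beta> x) n \<le> (lead_rate \<alpha> \<beta> + 2 * sin \<beta> * Max (x ` {..n})) / (lead_rate \<alpha> \<beta>)\<^sup>2"
proof -
  let ?P = "lead_rate \<alpha> \<beta>" and ?M = "trail_rate \<alpha> \<beta>" and ?h = "Max (x ` {..n})"
  obtain u v where H: "hedge \<alpha> \<beta> x n = (u, v)"
    by (cases "hedge \<alpha> \<beta> x n")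
  from assms have x0: "x 0 = 0" and "\<forall>i<n. \<not> redundant x i"
    and "Min (x ` {..n}) = -1" and h: "0 \<le> ?h" "?h \<le> 1"
    unfolding good_input_def by auto
  with hedge_stateD[OF hedge_state_invariant[OF x0 _ H]] have height: "v = cos \<beta> * cost (hedge \<alpha> \<beta> x) n"
    and "reach_invariant ?P ?M (u + v * tan \<alpha>) (v * tan \<alpha> - u) ?h 1"
    by auto
  then have "?P\<^sup>2 * ((u + v * tan \<alpha>) + (v * tan \<alpha> - u)) \<le> (?P + ?M) * (?P + (?P - ?M) * ?h)"
    using lead_rate_pos trail_rate_nonneg trail_rate_le_lead_rate h by (intro reach_invariant_sum_le)
  moreover have "?P + ?M = 2 * cos \<beta> * tan \<alpha>" "?P - ?M = 2 * sin \<beta>"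
    by (simp_all add: lead_rate_def trail_rate_def)
  ultimately have "(2 * cos \<beta> * tan \<alpha>) * (?P\<^sup>2 * cost (hedge \<alpha> \<beta> x) n)
      \<le> (2 * cos \<beta> * tan \<alpha>) * (?P + 2 * sin \<beta> * ?h)"
    using height by (simp add: algebra_simps)
  then have "?P\<^sup>2 * cost (hedge \<alpha> \<beta> x) n \<le> ?P + 2 * sin \<beta> * ?h"
    using angle_trig_signs by simp
  then show ?thesis
    using lead_rate_pos by (simp add: field_simps)
qed

section \<open>The competitive ratio\<close>

(* f1 \<alpha> \<beta> r is the bound on the cost of Hedge for requests spanning [-1, r], divided by the
   distance from the origin to the apex of the final cone. *)
lemma f1_eq_div_edist_apex:
  "f1 \<alpha> \<beta> r = (lead_rate \<alpha> \<beta> + 2 * sin \<beta> * r) / (lead_rate \<alpha> \<beta>)\<^sup>2 / edist (0, 0) (apex \<alpha> r)"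
proof -
  have "0 < sqrt (1 + r\<^sup>2 + 2 * cos (2 * \<alpha>) * r)"
    using quadratic_pos[of "2 * cos (2 * \<alpha>)" r] abs_cos_double_less_one[OF angles(1,2)] by simp
  then show ?thesis
    using lead_rate_pos angle_trig_signs
    unfolding f1_eq coefA_eq lead_rate_eq[symmetric] edist_origin_apex[OF angles(1,2)]
    by (simp add: field_simps power2_eq_square)
qed

lemma hedge_ratio_le:
  assumes "good_input x n"
  shows "0 < OPT \<alpha> x n \<and> cost (hedge \<alpha> \<beta> x) n / OPT \<alpha> x n \<le> f1 \<alpha> \<beta> (r0 \<alpha> \<beta>)"
proof -
  let ?P = "lead_rate \<alpha> \<beta>" and ?h = "Max (x ` {..n})"
  define m where "m = max ?h (- cos (2 * \<alpha>))"
  define d where "d = edist (0, 0) (apex \<alpha> m)"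
  from assms have x0: "x 0 = 0" and nonredundant: "\<forall>i<n. \<not> redundant x i"
    and Min: "Min (x ` {..n}) = -1" and h: "0 \<le> ?h" "?h \<le> 1"
    unfolding good_input_def by auto
  have "0 < d"
    using quadratic_pos[of "2 * cos (2 * \<alpha>)" m] abs_cos_double_less_one[OF angles(1,2)] angle_trig_signs
    by (simp add: d_def edist_origin_apex[OF angles(1,2)])
  have "d \<le> OPT \<alpha> x n"
  proof (rule le_OPT[OF hedge_solution[OF x0 nonredundant]])
    fix p
    assume "p \<in> FCs \<alpha> x n"
    then show "d \<le> edist (0, 0) p"
      unfolding d_def m_def using edist_apex_le[OF angles(1,2) h] Min
      by (cases p) (auto simp: mem_FCs_iff)
  qed
  have f1_m: "f1 \<alpha> \<beta> m * d = (?P + 2 * sin \<beta> * m) / ?P\<^sup>2"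
    using \<open>0 < d\<close> by (simp add: f1_eq_div_edist_apex d_def)
  have "?h \<le> m"
    by (simp add: m_def)
  have "0 \<le> (?P + 2 * sin \<beta> * m) / ?P\<^sup>2"
    using lead_rate_pos angle_trig_signs(5) h \<open>?h \<le> m\<close> by simp
  then have "0 \<le> f1 \<alpha> \<beta> m * d"
    unfolding f1_m .
  then have "0 \<le> f1 \<alpha> \<beta> m"
    using \<open>0 < d\<close> by (simp add: zero_le_mult_iff)
  have "cost (hedge \<alpha> \<beta> x) n \<le> (?P + 2 * sin \<beta> * ?h) / ?P\<^sup>2"
    by (rule hedge_cost_le[OF assms])
  also have "\<dots> \<le> f1 \<alpha> \<beta> m * d"
    unfolding f1_m using angle_trig_signs(5) \<open>?h \<le> m\<close>
    by (intro divide_right_mono add_left_mono mult_left_mono) auto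
  also have "\<dots> \<le> f1 \<alpha> \<beta> (r0 \<alpha> \<beta>) * OPT \<alpha> x n"
    using f1_le_f1_r0[OF angles, of m] \<open>0 \<le> f1 \<alpha> \<beta> m\<close> \<open>0 < d\<close> \<open>d \<le> OPT \<alpha> x n\<close>
    by (intro mult_mono) auto
  finally show ?thesis
    using \<open>0 < d\<close> \<open>d \<le> OPT \<alpha> x n\<close> by (simp add: divide_le_eq)
qed

lemma r0_mul_trail_rate_less: "r0 \<alpha> \<beta> * trail_rate \<alpha> \<beta> < lead_rate \<alpha> \<beta>"
proof -
  let ?A = "coefA \<alpha> \<beta>"
  have trail: "trail_rate \<alpha> \<beta> = lead_rate \<alpha> \<beta> * (1 - ?A)"
    using lead_rate_pos by (simp add: coefA_eq trail_rate_def lead_rate_def field_simps)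
  have "r0 \<alpha> \<beta> * (1 - ?A) < 1"
  proof (cases "?A = 0")
    case True
    then show ?thesis
      using abs_cos_double_less_one[OF angles(1,2)] by (simp add: r0_eq)
  next
    case False
    then have "0 < ?A" "?A \<le> 1"
      using coefA_bounds[OF angles] by auto
    show ?thesis
    proof (cases "0 \<le> r0 \<alpha> \<beta>")
      case True
      then have "r0 \<alpha> \<beta> * (1 - ?A) \<le> 1 * (1 - ?A)"
        using r0_le_one[OF angles] \<open>?A \<le> 1\<close> by (intro mult_right_mono) auto
      then show ?thesis
        using \<open>0 < ?A\<close> by simp
    next
      case False
      then have "r0 \<alpha> \<beta> * (1 - ?A) \<le> 0"
        using \<open>?A \<le> 1\<close> by (simp add: mult_nonpos_nonneg)
      then show ?thesis
        by simp
    qed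
  qed
  then show ?thesis
    unfolding trail using lead_rate_pos by (simp add: mult.left_commute)
qed

lemma hedge_cost_single_left_request:
  "\<exists>x. good_input x 1 \<and> Max (x ` {..1}) = 0 \<and> cost (hedge \<alpha> \<beta> x) 1 = 1 / lead_rate \<alpha> \<beta>"
proof -
  define x :: "nat \<Rightarrow> real" where "x j = (if j = 0 then 0 else -1)" for j
  have x_values: "x 0 = 0" "x (Suc 0) = -1"
    by (simp_all add: x_def)
  have images: "x ` {..0} = {0}" "x ` {..Suc 0} = {0, -1}"
    by (auto simp: x_def atMost_Suc)
  have "(0, 0) \<in> FCs \<alpha> x 0"
    by (simp add: mem_FCs_iff x_values)
  then have "hedge \<alpha> \<beta> x (Suc 0) = (0 - (1 / lead_rate \<alpha> \<beta>) * sin \<beta>, 0 + (1 / lead_rate \<alpha> \<beta>) * cos \<beta>)"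
    using hedge_Suc_left[of x 0 0 0] by (simp add: images x_values)
  then have "cost (hedge \<alpha> \<beta> x) 1 = 1 / lead_rate \<alpha> \<beta>"
    using edist_ray(2)[where T = "1 / lead_rate \<alpha> \<beta>" and u = 0 and v = 0] lead_rate_pos by (simp add: cost_def)
  with good_input_two_requests[OF x_values] show ?thesis
    by blast
qed

lemma hedge_cost_right_then_left_request:
  assumes "0 < R" "R \<le> 1" "R * trail_rate \<alpha> \<beta> < lead_rate \<alpha> \<beta>"
  shows "\<exists>x. good_input x 2 \<and> Max (x ` {..2}) = R \<and>
    cost (hedge \<alpha> \<beta> x) 2 = (lead_rate \<alpha> \<beta> + 2 * sin \<beta> * R) / (lead_rate \<alpha> \<beta>)\<^sup>2"
proof -
  let ?P = "lead_rate \<alpha> \<beta>" and ?M = "trail_rate \<alpha> \<beta>"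
  define x :: "nat \<Rightarrow> real" where "x j = (if j = 0 then 0 else if j = 1 then R else -1)" for j
  define T1 T2 where "T1 = R / ?P" and "T2 = (1 - T1 * ?M) / ?P"
  have x_values: "x 0 = 0" "x (Suc 0) = R" "x (Suc (Suc 0)) = -1"
    by (simp_all add: x_def)
  have images: "x ` {..0} = {0}" "x ` {..Suc 0} = {0, R}"
    by (auto simp: x_def atMost_Suc)
  have good: "good_input x 2" and Max: "Max (x ` {..2}) = R"
    using good_input_three_requests[OF x_values assms(1,2)] by auto
  have "(0, 0) \<in> FCs \<alpha> x 0"
    by (simp add: mem_FCs_iff x_values)
  then have H1: "hedge \<alpha> \<beta> x (Suc 0) = (0 + T1 * sin \<beta>, 0 + T1 * cos \<beta>)"
    using hedge_Suc_right[of x 0 0 0] assms(1) by (simp add: images x_values T1_def)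
  have "solution \<alpha> x 2 (hedge \<alpha> \<beta> x)"
    using good by (intro hedge_solution) (auto simp: good_input_def)
  then have feasible1: "hedge \<alpha> \<beta> x (Suc 0) \<in> FCs \<alpha> x (Suc 0)"
    unfolding solution_def by (metis One_nat_def one_le_numeral)
  have "T1 * ?M < 1"
    using assms(3) lead_rate_pos by (simp add: T1_def field_simps)
  then have uncovered: "x (Suc (Suc 0)) < (0 + T1 * sin \<beta>) - (0 + T1 * cos \<beta>) * tan \<alpha>"
    by (simp add: x_values trail_rate_def algebra_simps)
  have new_min: "x (Suc (Suc 0)) < Min (x ` {..Suc 0})"
    using assms(1) by (simp add: images x_values)
  have T2_eq: "(- x (Suc (Suc 0)) - ((0 + T1 * cos \<beta>) * tan \<alpha> - (0 + T1 * sin \<beta>))) / ?P = T2"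
    using reach_after_move(2)[where u = 0 and v = 0 and T = T1] by (simp add: x_values T2_def)
  have H2: "hedge \<alpha> \<beta> x (Suc (Suc 0)) = (0 + T1 * sin \<beta> - T2 * sin \<beta>, 0 + T1 * cos \<beta> + T2 * cos \<beta>)"
    using hedge_Suc_left[OF H1 feasible1[unfolded H1] x_values(1) new_min uncovered]
    unfolding T2_eq .
  have "0 \<le> T1" "0 \<le> T2"
    using assms(1) \<open>T1 * ?M < 1\<close> lead_rate_pos by (simp_all add: T1_def T2_def)
  then have "cost (hedge \<alpha> \<beta> x) 2 = T1 + T2"
    using H1 H2 edist_ray(1)[where T = T1 and u = 0 and v = 0]
      edist_ray(2)[where T = T2 and u = "0 + T1 * sin \<beta>" and v = "0 + T1 * cos \<beta>"]
    by (simp add: cost_def numeral_2_eq_2)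
  also have "\<dots> = (?P + 2 * sin \<beta> * R) / ?P\<^sup>2"
  proof -
    have M: "?M = ?P - 2 * sin \<beta>"
      by (simp add: lead_rate_def trail_rate_def)
    show ?thesis
      unfolding T1_def T2_def M using lead_rate_pos by (simp add: field_simps power2_eq_square)
  qed
  finally show ?thesis
    using good Max by blast
qed

lemma hedge_ratio_attained:
  assumes "0 \<le> R" "R \<le> 1" "R * trail_rate \<alpha> \<beta> < lead_rate \<alpha> \<beta>"
  shows "\<exists>x n. good_input x n \<and> f1 \<alpha> \<beta> R \<le> cost (hedge \<alpha> \<beta> x) n / OPT \<alpha> x n"
proof -
  obtain x n where good: "good_input x n" and Max: "Max (x ` {..n}) = R"
    and cost: "cost (hedge \<alpha> \<beta> x) n = (lead_rate \<alpha> \<beta> + 2 * sin \<beta> * R) / (lead_rate \<alpha> \<beta>)\<^sup>2"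
  proof (cases "R = 0")
    case True
    with hedge_cost_single_left_request lead_rate_pos show ?thesis
      by (auto intro: that simp: power2_eq_square)
  next
    case False
    then have "0 < R"
      using assms(1) by simp
    then obtain x where "good_input x 2" "Max (x ` {..2}) = R"
      "cost (hedge \<alpha> \<beta> x) 2 = (lead_rate \<alpha> \<beta> + 2 * sin \<beta> * R) / (lead_rate \<alpha> \<beta>)\<^sup>2"
      using hedge_cost_right_then_left_request assms(2,3) by blast
    then show ?thesis
      by (rule that)
  qed
  from good have input: "x 0 = 0" "1 \<le> n" "Min (x ` {..n}) = -1"
    by (auto simp: good_input_def)
  have "OPT \<alpha> x n \<le> edist (0, 0) (apex \<alpha> R)"
    using assms(1)
    by (intro OPT_le_edist[where x = x, OF input(1,2)] apex_mem_FCs[OF angle_trig_signs(1) Max input(3)])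
      simp
  moreover have "0 < OPT \<alpha> x n"
    using hedge_ratio_le[OF good] by simp
  ultimately have "f1 \<alpha> \<beta> R * OPT \<alpha> x n \<le> cost (hedge \<alpha> \<beta> x) n"
    using cost lead_rate_pos angle_trig_signs(5) assms(1)
    by (simp add: f1_eq_div_edist_apex divide_le_eq mult_left_mono)
  then have "f1 \<alpha> \<beta> R \<le> cost (hedge \<alpha> \<beta> x) n / OPT \<alpha> x n"
    using \<open>0 < OPT \<alpha> x n\<close> by (simp add: pos_le_divide_eq)
  with good show ?thesis
    by blast
qed

end

theorem lemma8:
  fixes \<alpha> \<beta> :: real
  assumes "(0 < \<alpha> \<and> \<alpha> \<le> pi/4 \<and> tfun \<alpha> \<le> \<beta> \<and> \<beta> \<le> \<alpha>)
         \<or> (pi/4 \<le> \<alpha> \<and> \<alpha> < pi/2 \<and> 0 \<le> \<beta> \<and> \<beta> \<le> \<alpha>)"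
  shows "hedge_ratio \<alpha> \<beta> = ereal (f1 \<alpha> \<beta> (r0 \<alpha> \<beta>))"
proof -
  have angles: "0 < \<alpha>" "\<alpha> < pi / 2" "0 \<le> \<beta>" "\<beta> \<le> \<alpha>"
    using assms tfun_nonneg[of \<alpha>] pi_gt_zero by auto
  have "0 \<le> r0 \<alpha> \<beta>"
    using assms by (intro r0_nonneg[OF angles]) auto
  then obtain x n where "good_input x n" "f1 \<alpha> \<beta> (r0 \<alpha> \<beta>) \<le> cost (hedge \<alpha> \<beta> x) n / OPT \<alpha> x n"
    using hedge_ratio_attained[OF angles _ r0_le_one[OF angles] r0_mul_trail_rate_less[OF angles]]
    by blast
  then have "ereal (f1 \<alpha> \<beta> (r0 \<alpha> \<beta>)) \<le> hedge_ratio \<alpha> \<beta>"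
    unfolding hedge_ratio_def by (intro SUP_upper2[of "(x, n)"]) auto
  moreover have "hedge_ratio \<alpha> \<beta> \<le> ereal (f1 \<alpha> \<beta> (r0 \<alpha> \<beta>))"
    unfolding hedge_ratio_def using hedge_ratio_le[OF angles] by (auto intro!: SUP_least)
  ultimately show ?thesis
    by (rule antisym[rotated])
qed

end
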